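(* For no natural number $k\ge 0$ is there a one-tape infinite time Turing machine with a $k$-cell scratch pad that computes the stretch function $s(a)=\langle a_0\,0\,0\,a_1\,0\,0\,a_2\,0\,0\cdots\rangle$ in such a way that on every input $a\in\mathbb{R}$ it halts within at most $\omega$ steps.
   Context: $\mathbb{R}=2^\omega$; $a_i$ is the $i$-th digit of $a$. A one-tape infinite time Turing machine with a $k$-cell scratch pad has a single tape with cells indexed by $\{-k,\dots,-1\}\cup\omega$ holding values in $\{0,1\}$, the cells $-k,\dots,-1$ forming the scratch pad (for $k=0$ this is an ordinary one-tape machine), one head, and a program with finitely many states including start, halt and a limit state. It operates as an ordinary Turing machine at successor stages (moving left from the leftmost cell leaves the head in place); at limit stages the head returns to the leftmost cell, the state becomes the limit state, and each cell takes the $\limsup$ of its earlier values. The input $a$ is written on cells $0,1,2,\dots$ with the pad initially $0$, and upon halting the output is the contents of cells $0,1,2,\dots$. *)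

theory Defs
  imports Main
begin

datatype move = MoveL | MoveR

text \<open>A program: states are the naturals below num_states; transition function
  delta q b = (new state, symbol written, move).\<close>
record program =
  num_states :: nat
  start_st :: nat
  halt_st :: nat
  limit_st :: nat
  delta :: "nat \<Rightarrow> bool \<Rightarrow> nat \<times> bool \<times> move"

definition wf_program :: "program \<Rightarrow> bool" where
  "wf_program P \<longleftrightarrow> start_st P < num_states P \<and> halt_st P < num_states P \<and>
     limit_st P < num_states P \<and>
     (\<forall>q b. q < num_states P \<longrightarrow> fst (delta P q b) < num_states P)"

text \<open>Configuration: state, head position, tape. Cells are integers;
  with a k-cell scratch pad the used cells are -k,...,-1,0,1,2,...\<close>
type_synonym config = "nat \<times> int \<times> (int \<Rightarrow> bool)"

definition step :: "nat \<Rightarrow> program \<Rightarrow> config \<Rightarrow> config" where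
  "step k P c = (case c of (q, h, t) \<Rightarrow>
     if q = halt_st P then c else
     (case delta P q (t h) of (q', b, m) \<Rightarrow>
        (q', (case m of MoveL \<Rightarrow> max (- int k) (h - 1) | MoveR \<Rightarrow> h + 1), t(h := b))))"

definition init_config :: "nat \<Rightarrow> program \<Rightarrow> (nat \<Rightarrow> bool) \<Rightarrow> config" where
  "init_config k P a = (start_st P, - int k, (\<lambda>i. if i \<ge> 0 then a (nat i) else False))"

definition run :: "nat \<Rightarrow> program \<Rightarrow> (nat \<Rightarrow> bool) \<Rightarrow> nat \<Rightarrow> config" where
  "run k P a n = (step k P ^^ n) (init_config k P a)"

definition state_at :: "nat \<Rightarrow> program \<Rightarrow> (nat \<Rightarrow> bool) \<Rightarrow> nat \<Rightarrow> nat" where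
  "state_at k P a n = fst (run k P a n)"

definition tape_at :: "nat \<Rightarrow> program \<Rightarrow> (nat \<Rightarrow> bool) \<Rightarrow> nat \<Rightarrow> int \<Rightarrow> bool" where
  "tape_at k P a n = snd (snd (run k P a n))"

definition tape_omega :: "nat \<Rightarrow> program \<Rightarrow> (nat \<Rightarrow> bool) \<Rightarrow> int \<Rightarrow> bool" where
  "tape_omega k P a i \<longleftrightarrow> (\<forall>m. \<exists>n\<ge>m. tape_at k P a n i)"

definition output_of :: "(int \<Rightarrow> bool) \<Rightarrow> nat \<Rightarrow> bool" where
  "output_of t = (\<lambda>i. t (int i))"

text \<open>At stage omega the state is the limit state, so halting at omega means
  no halt at a finite stage and the limit state is the halt state.\<close>
definition halts_within_omega_with ::
  "nat \<Rightarrow> program \<Rightarrow> (nat \<Rightarrow> bool) \<Rightarrow> (nat \<Rightarrow> bool) \<Rightarrow> bool" where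
  "halts_within_omega_with k P a b \<longleftrightarrow>
     (\<exists>n. state_at k P a n = halt_st P \<and> output_of (tape_at k P a n) = b) \<or>
     ((\<forall>n. state_at k P a n \<noteq> halt_st P) \<and> limit_st P = halt_st P \<and>
        output_of (tape_omega k P a) = b)"

definition stretch :: "(nat \<Rightarrow> bool) \<Rightarrow> nat \<Rightarrow> bool" where
  "stretch a i \<longleftrightarrow> i mod 3 = 0 \<and> a (i div 3)"

end

theory Submission
  imports Defs "HOL-Analysis.Function_Topology"
begin

(*
  Call a finite stage t a checkpoint for input a if the machine has halted or its head is within
  the first 3n + 1 cells, and the 2n cells below 3n that the stretched output leaves blank are
  blank. A run that halts within omega with output s(a) reaches a checkpoint: at its halting stage,
  or, in the limit case, once the gap cells have become blank for good, either at a later visit of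
  the head to the first 3n cells or just after its last such visit. Being a checkpoint at t depends
  only on the first t + 3n input bits, so by compactness of Cantor space all inputs reach a
  checkpoint before a common bound L. Among the 2^N inputs supported below N = L + 3n, the
  configuration at the checkpoint determines the output, hence the input; but it is given by the
  state, the head position capped at 3n + 2, and the N + k - 2n non-gap cells of the area the
  machine can have written. So 4^n <= |Q| 2^k (3n + k + 3), which fails for large n.
*)

lemma compact_UNIV_fun:
  assumes "compact (UNIV :: 'b::topological_space set)"
  shows "compact (UNIV :: ('a \<Rightarrow> 'b) set)"
proof -
  have "compactin (product_topology (\<lambda>_. euclidean) UNIV) (Pi\<^sub>E UNIV (\<lambda>_. UNIV :: 'b set))"
    unfolding compactin_PiE using assms by simp
  then show ?thesis
    by (metis euclidean_product_topology compactin_euclidean_iff PiE_UNIV_domain Pi_UNIV)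
qed

lemma open_Collect_finite_dependence:
  fixes P :: "('a \<Rightarrow> 'b::discrete_topology) \<Rightarrow> bool"
  assumes "finite I" and "\<And>f g. (\<And>i. i \<in> I \<Longrightarrow> f i = g i) \<Longrightarrow> P f = P g"
  shows "open {f. P f}"
proof -
  have "{f. P f} = (\<Union>g\<in>{f. P f}. {f. \<forall>i\<in>I. f i \<in> {g i}})"
  proof (intro equalityI subsetI)
    fix f assume "f \<in> (\<Union>g\<in>{f. P f}. {f. \<forall>i\<in>I. f i \<in> {g i}})"
    then obtain g where "P g" and "\<And>i. i \<in> I \<Longrightarrow> f i = g i"
      by blast
    with assms(2)[of f g] show "f \<in> {f. P f}"
      by simp
  qed blast
  also have "open \<dots>"
    by (intro open_UN ballI product_topology_basis'[where x = "\<lambda>i. i", OF \<open>finite I\<close>] open_discrete)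
  finally show ?thesis .
qed

lemma uniform_bound_of_finite_dependence:
  fixes R :: "('a \<Rightarrow> 'b::{finite,discrete_topology}) \<Rightarrow> nat \<Rightarrow> bool"
  assumes "\<And>t. finite (I t)"
    and "\<And>f g t. (\<And>i. i \<in> I t \<Longrightarrow> f i = g i) \<Longrightarrow> R f t = R g t"
    and "\<And>f. \<exists>t. R f t"
  shows "\<exists>L. \<forall>f. \<exists>t\<le>L. R f t"
proof -
  have "compact (UNIV :: ('a \<Rightarrow> 'b) set)"
    by (intro compact_UNIV_fun finite_imp_compact finite)
  moreover have "open {f. R f t}" for t
    using assms(1,2) by (rule open_Collect_finite_dependence)
  moreover have "UNIV \<subseteq> (\<Union>t\<in>UNIV. {f. R f t})"
    using assms(3) by blast
  ultimately obtain J where "finite J" "UNIV \<subseteq> (\<Union>t\<in>J. {f. R f t})"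
    by (rule compactE_image)
  moreover obtain L where "J \<subseteq> {..L}"
    using \<open>finite J\<close> finite_nat_iff_bounded_le by blast
  ultimately show ?thesis by blast
qed

definition head_at :: "nat \<Rightarrow> program \<Rightarrow> (nat \<Rightarrow> bool) \<Rightarrow> nat \<Rightarrow> int" where
  "head_at k P a n = fst (snd (run k P a n))"

lemma run_eq_components: "run k P a n = (state_at k P a n, head_at k P a n, tape_at k P a n)"
  by (simp add: state_at_def head_at_def tape_at_def)

lemma run_Suc: "run k P a (Suc n) = step k P (run k P a n)"
  by (simp add: run_def)

lemma run_add: "run k P a (m + n) = (step k P ^^ n) (run k P a m)"
  unfolding run_def by (subst add.commute) (simp add: funpow_add)

lemma state_at_0: "state_at k P a 0 = start_st P"
  and head_at_0: "head_at k P a 0 = - int k"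
  and tape_at_0: "tape_at k P a 0 = (\<lambda>i. 0 \<le> i \<and> a (nat i))"
  by (simp_all add: state_at_def head_at_def tape_at_def run_def init_config_def fun_eq_iff)

lemma run_Suc_components:
  "run k P a (Suc n) = step k P (state_at k P a n, head_at k P a n, tape_at k P a n)"
  by (metis run_Suc run_eq_components)

lemma state_at_Suc: "state_at k P a (Suc n) =
    (if state_at k P a n = halt_st P then state_at k P a n
     else fst (delta P (state_at k P a n) (tape_at k P a n (head_at k P a n))))"
  and head_at_Suc: "head_at k P a (Suc n) =
    (if state_at k P a n = halt_st P then head_at k P a n
     else case snd (snd (delta P (state_at k P a n) (tape_at k P a n (head_at k P a n)))) of
       MoveL \<Rightarrow> max (- int k) (head_at k P a n - 1) | MoveR \<Rightarrow> head_at k P a n + 1)"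
  and tape_at_Suc: "tape_at k P a (Suc n) =
    (if state_at k P a n = halt_st P then tape_at k P a n
     else (tape_at k P a n)(head_at k P a n :=
       fst (snd (delta P (state_at k P a n) (tape_at k P a n (head_at k P a n))))))"
  unfolding state_at_def[of k P a "Suc n"] head_at_def[of k P a "Suc n"] tape_at_def[of k P a "Suc n"]
    run_Suc_components by (simp_all add: step_def split: prod.split)

lemma head_at_bounds: "- int k \<le> head_at k P a n \<and> head_at k P a n \<le> int n - int k"
  by (induction n) (auto simp: head_at_0 head_at_Suc split: move.split)

lemma head_at_Suc_le: "head_at k P a (Suc n) \<le> head_at k P a n + 1"
  using head_at_bounds[of k P a n] by (auto simp: head_at_Suc split: move.split)

lemma tape_at_unvisited:
  assumes "t0 \<le> t1" and "\<And>s. t0 \<le> s \<Longrightarrow> s < t1 \<Longrightarrow> head_at k P a s \<noteq> x"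
  shows "tape_at k P a t1 x = tape_at k P a t0 x"
  using assms by (induction t1 rule: dec_induct) (auto simp: tape_at_Suc)

lemma tape_at_out_of_reach:
  assumes "x < - int k \<or> int t - int k \<le> x"
  shows "tape_at k P a t x = tape_at k P a 0 x"
proof (rule tape_at_unvisited)
  fix s assume "s < t"
  then show "head_at k P a s \<noteq> x"
    using head_at_bounds[of k P a s] assms by linarith
qed simp

lemma state_at_lt_num_states: "wf_program P \<Longrightarrow> state_at k P a n < num_states P"
  by (induction n) (auto simp: state_at_0 state_at_Suc wf_program_def)

lemma run_halted:
  assumes "state_at k P a n = halt_st P" and "n \<le> m"
  shows "run k P a m = run k P a n"
proof -
  have "step k P (run k P a n) = run k P a n"
    using assms(1) by (subst (1 2) run_eq_components) (simp add: step_def)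
  with assms(2) show ?thesis
    by (induction m rule: dec_induct) (simp_all add: run_Suc)
qed

lemma run_prefix_agree:
  assumes "\<And>i. i < N \<Longrightarrow> a i = b i" and "t \<le> N"
  shows "state_at k P a t = state_at k P b t \<and> head_at k P a t = head_at k P b t \<and>
    (\<forall>x < int N. tape_at k P a t x = tape_at k P b t x)"
  using assms(2)
proof (induction t)
  case 0
  show ?case using assms(1) by (auto simp: state_at_0 head_at_0 tape_at_0)
next
  case (Suc t)
  then have IH: "state_at k P a t = state_at k P b t" "head_at k P a t = head_at k P b t"
    "\<forall>x < int N. tape_at k P a t x = tape_at k P b t x" by auto
  moreover have "head_at k P a t < int N"
    using head_at_bounds[of k P a t] Suc.prems by linarith
  ultimately have "tape_at k P a t (head_at k P a t) = tape_at k P b t (head_at k P b t)"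
    by simp
  with IH show ?case
    by (simp add: state_at_Suc head_at_Suc tape_at_Suc split: move.split)
qed

lemma halted_output:
  assumes "halts_within_omega_with k P a out" and "state_at k P a n = halt_st P"
  shows "out = output_of (tape_at k P a n)"
proof -
  from assms obtain n' where n': "state_at k P a n' = halt_st P" "output_of (tape_at k P a n') = out"
    unfolding halts_within_omega_with_def by blast
  have "run k P a n' = run k P a n"
    using run_halted[OF assms(2)] run_halted[OF n'(1)] by (metis nat_le_linear)
  with n'(2) show ?thesis
    by (simp add: tape_at_def)
qed

lemma tape_omega_shift:
  "tape_omega k P a x \<longleftrightarrow> (\<exists>\<^sub>F n in sequentially. tape_at k P a (T + n) x)"
proof -
  have "tape_omega k P a x \<longleftrightarrow> (\<exists>\<^sub>F n in sequentially. tape_at k P a n x)"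
    by (simp add: tape_omega_def frequently_sequentially)
  also have "\<dots> \<longleftrightarrow> (\<exists>\<^sub>F n in sequentially. tape_at k P a (n + T) x)"
    using eventually_sequentially_seg[of "\<lambda>n. \<not> tape_at k P a n x" T] by (simp add: frequently_def)
  finally show ?thesis
    by (simp add: add.commute)
qed

lemma same_output_of_same_halting_config:
  assumes "run k P a T = run k P b T'"
    and "halts_within_omega_with k P a oa" and "halts_within_omega_with k P b ob"
    and "state_at k P a n = halt_st P"
  shows "oa = ob"
proof -
  have "run k P b (T' + n) = run k P a n"
    using assms(1) run_halted[OF assms(4), of "T + n"] by (simp add: run_add)
  then have "state_at k P b (T' + n) = halt_st P" and "tape_at k P b (T' + n) = tape_at k P a n"
    using assms(4) by (simp_all add: state_at_def tape_at_def)
  with halted_output[OF assms(2,4)] halted_output[OF assms(3)] show ?thesis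
    by simp
qed

lemma same_output_of_same_config:
  assumes "run k P a T = run k P b T'"
    and "halts_within_omega_with k P a oa" and "halts_within_omega_with k P b ob"
  shows "oa = ob"
proof (cases "\<exists>n. state_at k P a n = halt_st P \<or> state_at k P b n = halt_st P")
  case True
  then show ?thesis
    using same_output_of_same_halting_config[OF assms]
      same_output_of_same_halting_config[OF assms(1)[symmetric] assms(3,2)] by metis
next
  case False
  have "run k P a (T + n) = run k P b (T' + n)" for n
    using assms(1) by (simp add: run_add)
  then have "tape_omega k P a = tape_omega k P b"
    by (simp add: fun_eq_iff tape_omega_shift[of k P a _ T] tape_omega_shift[of k P b _ T'] tape_at_def)
  with False assms(2,3) show ?thesis
    unfolding halts_within_omega_with_def by auto
qed

definition stretch_gaps :: "nat \<Rightarrow> nat set" where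
  "stretch_gaps n = {i. i < 3 * n \<and> i mod 3 \<noteq> 0}"

lemma stretch_gaps_Suc: "stretch_gaps (Suc n) = insert (3 * n + 1) (insert (3 * n + 2) (stretch_gaps n))"
  unfolding stretch_gaps_def by (rule set_eqI) (simp, presburger)

lemma finite_stretch_gaps: "finite (stretch_gaps n)"
  by (simp add: stretch_gaps_def)

lemma card_stretch_gaps: "card (stretch_gaps n) = 2 * n"
  by (induction n) (simp_all add: stretch_gaps_Suc finite_stretch_gaps, simp_all add: stretch_gaps_def)

lemma not_stretch_gap: "i \<in> stretch_gaps n \<Longrightarrow> \<not> stretch a i"
  by (simp add: stretch_gaps_def stretch_def)

lemma stretch_triple: "stretch a (3 * j) = a j"
  by (simp add: stretch_def)

lemma inj_stretch: "inj stretch"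
proof (rule injI)
  fix a b :: "nat \<Rightarrow> bool" assume "stretch a = stretch b"
  show "a = b"
  proof
    fix j
    show "a j = b j"
      using stretch_triple[of a j] stretch_triple[of b j] \<open>stretch a = stretch b\<close> by simp
  qed
qed

definition checkpoint :: "nat \<Rightarrow> program \<Rightarrow> nat \<Rightarrow> (nat \<Rightarrow> bool) \<Rightarrow> nat \<Rightarrow> bool" where
  "checkpoint k P n a t \<longleftrightarrow>
     (state_at k P a t = halt_st P \<or> head_at k P a t \<le> int (3 * n + 1)) \<and>
     (\<forall>i \<in> stretch_gaps n. \<not> tape_at k P a t (int i))"

lemma checkpoint_if_gaps_eventually_blank:
  assumes "\<forall>\<^sub>F t in sequentially. \<forall>i \<in> stretch_gaps n. \<not> tape_at k P a t (int i)"
  shows "\<exists>t. checkpoint k P n a t"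
proof -
  obtain S where blank: "\<And>t. S \<le> t \<Longrightarrow> \<forall>i \<in> stretch_gaps n. \<not> tape_at k P a t (int i)"
    using assms unfolding eventually_sequentially by blast
  show ?thesis
  proof (cases "\<exists>t\<ge>S. head_at k P a t \<le> int (3 * n)")
    case True
    then show ?thesis
      using blank unfolding checkpoint_def by force
  next
    case False
    then have "\<forall>s. head_at k P a s \<le> int (3 * n) \<longrightarrow> s \<le> S"
      by (meson nle_le)
    \<comment> \<open>u is the last stage with the head in the first 3n cells, so from stage u + 1 on no gap cell is written\<close>
    then obtain u where u: "head_at k P a u \<le> int (3 * n)"
      and later: "\<And>s. head_at k P a s \<le> int (3 * n) \<Longrightarrow> s \<le> u"
      using Nat.ex_has_greatest_nat[of "\<lambda>s. head_at k P a s \<le> int (3 * n)" 0 S] head_at_0 by force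
    have "tape_at k P a (max S (Suc u)) (int i) = tape_at k P a (Suc u) (int i)"
      if "i \<in> stretch_gaps n" for i
    proof (rule tape_at_unvisited)
      fix s assume "Suc u \<le> s"
      then have "\<not> s \<le> u"
        by simp
      then have "int (3 * n) < head_at k P a s"
        using later[of s] by (meson not_le)
      with that show "head_at k P a s \<noteq> int i"
        by (auto simp: stretch_gaps_def)
    qed simp
    then have "\<forall>i \<in> stretch_gaps n. \<not> tape_at k P a (Suc u) (int i)"
      using blank[of "max S (Suc u)"] by simp
    moreover have "head_at k P a (Suc u) \<le> int (3 * n + 1)"
      using head_at_Suc_le[of k P a u] u by simp
    ultimately show ?thesis
      unfolding checkpoint_def by blast
  qed
qed

lemma checkpoint_exists:
  assumes "halts_within_omega_with k P a (stretch a)"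
  shows "\<exists>t. checkpoint k P n a t"
  using assms unfolding halts_within_omega_with_def
proof (elim disjE exE conjE)
  fix t assume "state_at k P a t = halt_st P" and "output_of (tape_at k P a t) = stretch a"
  then show ?thesis
    unfolding checkpoint_def output_of_def by (metis not_stretch_gap)
next
  assume "output_of (tape_omega k P a) = stretch a"
  then have "\<not> tape_omega k P a (int i)" if "i \<in> stretch_gaps n" for i
    using that not_stretch_gap unfolding output_of_def by metis
  then have "\<forall>i \<in> stretch_gaps n. \<forall>\<^sub>F t in sequentially. \<not> tape_at k P a t (int i)"
    by (simp add: tape_omega_def not_frequently flip: frequently_sequentially)
  then show ?thesis
    by (intro checkpoint_if_gaps_eventually_blank eventually_ball_finite finite_stretch_gaps)
qed

lemma checkpoint_prefix_agree:
  assumes "\<And>i. i < t + 3 * n \<Longrightarrow> a i = b i"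
  shows "checkpoint k P n a t = checkpoint k P n b t"
proof -
  have "state_at k P a t = state_at k P b t \<and> head_at k P a t = head_at k P b t \<and>
      (\<forall>x < int (t + 3 * n). tape_at k P a t x = tape_at k P b t x)"
    using assms by (intro run_prefix_agree) auto
  then show ?thesis
    unfolding checkpoint_def stretch_gaps_def by auto
qed

lemma checkpoint_time_bound:
  assumes "\<And>a. halts_within_omega_with k P a (stretch a)"
  shows "\<exists>L. \<forall>a. \<exists>t\<le>L. checkpoint k P n a t"
proof (rule uniform_bound_of_finite_dependence[where I = "\<lambda>t. {..<t + 3 * n}"])
  fix a b :: "nat \<Rightarrow> bool" and t
  assume "\<And>i. i \<in> {..<t + 3 * n} \<Longrightarrow> a i = b i"
  then show "checkpoint k P n a t = checkpoint k P n b t"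
    by (intro checkpoint_prefix_agree) simp
qed (use checkpoint_exists[OF assms] in auto)

lemma checkpoint_config_determines_input:
  assumes "halts_within_omega_with k P a (stretch a)" "halts_within_omega_with k P b (stretch b)"
    and "checkpoint k P n a t" "checkpoint k P n b t'"
    and "state_at k P a t = state_at k P b t'"
    and "min (head_at k P a t) (int (3 * n + 2)) = min (head_at k P b t') (int (3 * n + 2))"
    and "tape_at k P a t = tape_at k P b t'"
  shows "a = b"
proof -
  have "stretch a = stretch b"
  proof (cases "head_at k P a t \<le> int (3 * n + 1)")
    case True
    with assms(6) have "head_at k P a t = head_at k P b t'"
      by linarith
    with assms(5,7) have "run k P a t = run k P b t'"
      by (simp add: run_eq_components)
    then show ?thesis
      using assms(1,2) by (rule same_output_of_same_config)
  next
    case False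
    with assms(6) have "\<not> head_at k P b t' \<le> int (3 * n + 1)"
      by linarith
    with False assms(3,4) have "state_at k P a t = halt_st P" "state_at k P b t' = halt_st P"
      unfolding checkpoint_def by blast+
    with assms(1,2,7) show ?thesis
      by (metis halted_output)
  qed
  with inj_stretch show ?thesis
    by (simp add: inj_eq)
qed

lemma checkpoint_tape_blank_outside:
  assumes "checkpoint k P n a t" and "t \<le> N" and "\<forall>i\<ge>N. \<not> a i"
    and "x \<notin> {- int k..<int N} - int ` stretch_gaps n"
  shows "\<not> tape_at k P a t x"
proof (cases "x \<in> int ` stretch_gaps n")
  case True
  with assms(1) show ?thesis
    unfolding checkpoint_def by blast
next
  case False
  with assms(4) have "x < - int k \<or> int N \<le> x"
    by auto
  with assms(2,3) show ?thesis
    by (auto simp: tape_at_out_of_reach tape_at_0 nat_le_iff)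
qed

lemma checkpoint_input_count:
  assumes "\<And>a. halts_within_omega_with k P a (stretch a)" and "wf_program P"
    and T: "\<And>a. T a \<le> N \<and> checkpoint k P n a (T a)"
  shows "2 ^ N \<le> num_states P * (3 * n + k + 3) * 2 ^ card ({- int k..<int N} - int ` stretch_gaps n)"
proof -
  define W where "W = {- int k..<int N} - int ` stretch_gaps n"
  \<comment> \<open>A head beyond cell 3n + 1 only occurs at a halting checkpoint, where it is irrelevant.\<close>
  define code where "code S =
    (let a = (\<lambda>i. i \<in> S)
     in (state_at k P a (T a), min (head_at k P a (T a)) (int (3 * n + 2)), {x \<in> W. tape_at k P a (T a) x}))"
    for S
  have tape_from_window: "tape_at k P a (T a) = (\<lambda>x. x \<in> {x \<in> W. tape_at k P a (T a) x})"
    if "\<forall>i\<ge>N. \<not> a i" for a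
    using checkpoint_tape_blank_outside[of k P n a "T a" N] T[of a] that unfolding W_def by auto
  have "inj_on code (Pow {..<N})"
  proof (rule inj_onI)
    fix S1 S2 assume "S1 \<in> Pow {..<N}" "S2 \<in> Pow {..<N}" and "code S1 = code S2"
    define a1 a2 where "a1 = (\<lambda>i. i \<in> S1)" and "a2 = (\<lambda>i. i \<in> S2)"
    have "\<forall>i\<ge>N. \<not> a1 i" "\<forall>i\<ge>N. \<not> a2 i"
      using \<open>S1 \<in> Pow {..<N}\<close> \<open>S2 \<in> Pow {..<N}\<close> by (auto simp: a1_def a2_def)
    have same_state: "state_at k P a1 (T a1) = state_at k P a2 (T a2)"
      and same_head: "min (head_at k P a1 (T a1)) (int (3 * n + 2)) = min (head_at k P a2 (T a2)) (int (3 * n + 2))"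
      and same_window: "{x \<in> W. tape_at k P a1 (T a1) x} = {x \<in> W. tape_at k P a2 (T a2) x}"
      using \<open>code S1 = code S2\<close> by (simp_all add: code_def Let_def a1_def a2_def)
    have "tape_at k P a1 (T a1) = tape_at k P a2 (T a2)"
      using tape_from_window[OF \<open>\<forall>i\<ge>N. \<not> a1 i\<close>] tape_from_window[OF \<open>\<forall>i\<ge>N. \<not> a2 i\<close>] same_window
      by metis
    with same_state same_head T[of a1] T[of a2] have "a1 = a2"
      using checkpoint_config_determines_input[OF assms(1) assms(1)] by blast
    then show "S1 = S2"
      by (simp add: a1_def a2_def fun_eq_iff set_eq_iff)
  qed
  moreover have "code ` Pow {..<N} \<subseteq> {..<num_states P} \<times> {- int k..int (3 * n + 2)} \<times> Pow W"
    using state_at_lt_num_states[OF assms(2)] head_at_bounds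
    by (auto simp: code_def Let_def min_def)
  ultimately have "card (Pow {..<N}) \<le> card ({..<num_states P} \<times> {- int k..int (3 * n + 2)} \<times> Pow W)"
    by (intro card_inj_on_le) (auto simp: W_def)
  moreover have "card {- int k..int (3 * n + 2)} = 3 * n + k + 3"
    by simp
  ultimately show ?thesis
    by (simp add: card_cartesian_product card_Pow W_def)
qed

lemma checkpoint_count_bound:
  assumes "\<And>a. halts_within_omega_with k P a (stretch a)" and "wf_program P"
  shows "(4::nat) ^ n \<le> num_states P * 2 ^ k * (3 * n + k + 3)"
proof -
  obtain L T where T: "\<And>a. T a \<le> L \<and> checkpoint k P n a (T a)"
    using checkpoint_time_bound[OF assms(1)] by metis
  define N where "N = L + 3 * n"
  have "int ` stretch_gaps n \<subseteq> {- int k..<int N}"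
    by (auto simp: stretch_gaps_def N_def)
  then have "card ({- int k..<int N} - int ` stretch_gaps n) = N + k - 2 * n"
    by (simp add: card_Diff_subset finite_stretch_gaps card_image card_stretch_gaps)
  moreover have "T a \<le> N \<and> checkpoint k P n a (T a)" for a
    using T[of a] by (simp add: N_def)
  ultimately have "2 ^ N \<le> num_states P * (3 * n + k + 3) * 2 ^ (N + k - 2 * n)"
    using checkpoint_input_count[OF assms] by metis
  then have "2 ^ N * 4 ^ n \<le> num_states P * (3 * n + k + 3) * (2 ^ (N + k - 2 * n) * 2 ^ (2 * n))"
    by (simp add: power_mult)
  also have "num_states P * (3 * n + k + 3) * (2 ^ (N + k - 2 * n) * 2 ^ (2 * n)) =
      2 ^ N * (num_states P * 2 ^ k * (3 * n + k + 3))"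
    by (simp add: N_def algebra_simps flip: power_add)
  finally show ?thesis
    by simp
qed

lemma square_less_four_pow: "3 \<le> n \<Longrightarrow> 4 * n * n < (4::nat) ^ n"
proof (induction n rule: dec_induct)
  case (step n)
  have "4 * Suc n * Suc n = 4 * n * n + 8 * n + 4"
    by (simp add: algebra_simps)
  also have "\<dots> \<le> 4 * (4 * n * n)"
    using mult_le_mono1[OF step.hyps(1), of n] step.hyps(1) by linarith
  finally show ?case
    using step.IH by simp
qed simp

theorem mainTheorem20:
  shows "\<not> (\<exists>(k::nat) P. wf_program P \<and>
            (\<forall>a. halts_within_omega_with k P a (stretch a)))"
proof
  assume "\<exists>(k::nat) P. wf_program P \<and> (\<forall>a. halts_within_omega_with k P a (stretch a))"
  then obtain k P where wf: "wf_program P" and halts: "\<And>a. halts_within_omega_with k P a (stretch a)"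
    by blast
  define n where "n = num_states P * 2 ^ k + k + 3"
  have "(4::nat) ^ n \<le> num_states P * 2 ^ k * (3 * n + k + 3)"
    using halts wf by (rule checkpoint_count_bound)
  also have "\<dots> \<le> n * (4 * n)"
    by (intro mult_le_mono) (simp_all add: n_def)
  also have "\<dots> < 4 ^ n"
    using square_less_four_pow[of n] by (simp add: n_def algebra_simps)
  finally show False
    by simp
qed

end
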